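(* Let $n_1\ge1$, $n_2\ge1$ with $n_1+n_2\ge3$. Let $\mathcal L$ be the real Lie algebra generated by all block diagonal matrices $\begin{pmatrix}A&0\\0&B\end{pmatrix}$ with $A\in su(n_1)$, $B\in su(n_2)$ arbitrary, together with a single matrix which has entries $i$ in positions $(j,m)$ and $(m,j)$ and zeros elsewhere, for some fixed $1\le j\le n_1$ and $n_1+1\le m\le n_1+n_2$. Then $\mathcal L=su(n_1+n_2)$. *)

theory Defs
  imports Complex_Main "Jordan_Normal_Form.Matrix"
begin

definition mtrace :: "'a::comm_ring_1 mat \<Rightarrow> 'a" where
  "mtrace A = (\<Sum>i<dim_row A. A $$ (i,i))"

definition su :: "nat \<Rightarrow> complex mat set" where
  "su n = {A \<in> carrier_mat n n.
             (\<forall>i<n. \<forall>k<n. A $$ (k,i) = - cnj (A $$ (i,k))) \<and> mtrace A = 0}"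

definition lie_bracket :: "complex mat \<Rightarrow> complex mat \<Rightarrow> complex mat" where
  "lie_bracket X Y = X * Y - Y * X"

inductive_set real_lie_gen :: "nat \<Rightarrow> complex mat set \<Rightarrow> complex mat set"
  for n :: nat and S :: "complex mat set" where
  gen: "X \<in> S \<Longrightarrow> X \<in> real_lie_gen n S"
| zero: "0\<^sub>m n n \<in> real_lie_gen n S"
| add: "X \<in> real_lie_gen n S \<Longrightarrow> Y \<in> real_lie_gen n S \<Longrightarrow> X + Y \<in> real_lie_gen n S"
| smult: "X \<in> real_lie_gen n S \<Longrightarrow> complex_of_real r \<cdot>\<^sub>m X \<in> real_lie_gen n S"
| bracket: "X \<in> real_lie_gen n S \<Longrightarrow> Y \<in> real_lie_gen n S \<Longrightarrow> lie_bracket X Y \<in> real_lie_gen n S"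

definition block_diag :: "complex mat \<Rightarrow> complex mat \<Rightarrow> complex mat" where
  "block_diag A B = four_block_mat A (0\<^sub>m (dim_row A) (dim_col B)) (0\<^sub>m (dim_row B) (dim_col A)) B"

text \<open>The n x n matrix with entries i at positions (j,m) and (m,j) and 0 elsewhere (0-based indices).\<close>
definition sym_i_mat :: "nat \<Rightarrow> nat \<Rightarrow> nat \<Rightarrow> complex mat" where
  "sym_i_mat n j m = mat n n (\<lambda>(a,b). if (a = j \<and> b = m) \<or> (a = m \<and> b = j) then \<i> else 0)"

end

theory Submission
  imports Defs
begin

text \<open>
  The generated algebra lies in su(n), n = n1 + n2, because su(n) is a real Lie algebra containing
  the generators. Conversely su(n) is spanned over the reals by the matrices
  X_ab = E_ab - E_ba, Y_ab = i(E_ab + E_ba) and D_ab = i(E_aa - E_bb), so it suffices to generate these.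
  The block diagonal generators give X_ab and Y_ab for a, b in the same block, and the extra
  generator is Y_jm. The identity [X_ab, Y_bc] = Y_ac moves either index of a cross element Y_pq
  within its block, which yields every Y_ab. Then [Y_ac, Y_cb] = -X_ab for any third index c
  (this needs n >= 3) and [X_ab, Y_ab] = 2 D_ab.
\<close>

section \<open>Matrix units and their brackets\<close>

definition mat_unit :: "nat \<Rightarrow> nat \<Rightarrow> nat \<Rightarrow> 'a::semiring_1 mat" where
  "mat_unit n a b = mat n n (\<lambda>(r, s). if r = a \<and> s = b then 1 else 0)"

lemma mat_unit_carrier [simp]: "mat_unit n a b \<in> carrier_mat n n"
  and dim_mat_unit [simp]: "dim_row (mat_unit n a b) = n" "dim_col (mat_unit n a b) = n"
  by (simp_all add: mat_unit_def)

lemma index_mat_unit [simp]: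
  "r < n \<Longrightarrow> s < n \<Longrightarrow> mat_unit n a b $$ (r, s) = (if r = a \<and> s = b then 1 else 0)"
  by (simp add: mat_unit_def)

lemma mat_unit_mult:
  assumes "b < n"
  shows "mat_unit n a b * mat_unit n c d =
    (if b = c then mat_unit n a d else 0\<^sub>m n n :: 'a::semiring_1 mat)"
proof (rule eq_matI)
  fix r s assume "r < dim_row (if b = c then mat_unit n a d else 0\<^sub>m n n :: 'a mat)"
    "s < dim_col (if b = c then mat_unit n a d else 0\<^sub>m n n :: 'a mat)"
  then have rs: "r < n" "s < n" by (auto split: if_splits)
  have "(mat_unit n a b * mat_unit n c d :: 'a mat) $$ (r, s)
      = (\<Sum>k<n. (if r = a \<and> k = b then 1 else 0) * (if k = c \<and> s = d then 1 else 0))"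
    using rs by (simp add: scalar_prod_def lessThan_atLeast0)
  also have "\<dots> = (\<Sum>k<n. if k = b then (if r = a \<and> b = c \<and> s = d then 1 else 0) else 0)"
    by (rule sum.cong) auto
  also have "\<dots> = (if b = c then mat_unit n a d else 0\<^sub>m n n :: 'a mat) $$ (r, s)"
    using rs assms by auto
  finally show "(mat_unit n a b * mat_unit n c d) $$ (r, s) = \<dots>" .
qed auto

definition antisym_unit :: "nat \<Rightarrow> nat \<Rightarrow> nat \<Rightarrow> complex mat" where
  "antisym_unit n a b = mat_unit n a b - mat_unit n b a"

definition isym_unit :: "nat \<Rightarrow> nat \<Rightarrow> nat \<Rightarrow> complex mat" where
  "isym_unit n a b = \<i> \<cdot>\<^sub>m (mat_unit n a b + mat_unit n b a)"

definition idiag_unit :: "nat \<Rightarrow> nat \<Rightarrow> nat \<Rightarrow> complex mat" where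
  "idiag_unit n a b = \<i> \<cdot>\<^sub>m (mat_unit n a a - mat_unit n b b)"

lemma antisym_unit_carrier [simp]: "antisym_unit n a b \<in> carrier_mat n n"
  and isym_unit_carrier [simp]: "isym_unit n a b \<in> carrier_mat n n"
  and idiag_unit_carrier [simp]: "idiag_unit n a b \<in> carrier_mat n n"
  by (simp_all add: antisym_unit_def isym_unit_def idiag_unit_def minus_carrier_mat)

lemma dim_antisym_unit [simp]: "dim_row (antisym_unit n a b) = n" "dim_col (antisym_unit n a b) = n"
  and dim_isym_unit [simp]: "dim_row (isym_unit n a b) = n" "dim_col (isym_unit n a b) = n"
  and dim_idiag_unit [simp]: "dim_row (idiag_unit n a b) = n" "dim_col (idiag_unit n a b) = n"
  by (simp_all add: antisym_unit_def isym_unit_def idiag_unit_def)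

lemma index_antisym_unit [simp]: "r < n \<Longrightarrow> s < n \<Longrightarrow>
    antisym_unit n a b $$ (r, s) = (if r = a \<and> s = b then 1 else 0) - (if r = b \<and> s = a then 1 else 0)"
  and index_isym_unit [simp]: "r < n \<Longrightarrow> s < n \<Longrightarrow>
    isym_unit n a b $$ (r, s) = \<i> * ((if r = a \<and> s = b then 1 else 0) + (if r = b \<and> s = a then 1 else 0))"
  and index_idiag_unit [simp]: "r < n \<Longrightarrow> s < n \<Longrightarrow>
    idiag_unit n a b $$ (r, s) = \<i> * ((if r = a \<and> s = a then 1 else 0) - (if r = b \<and> s = b then 1 else 0))"
  by (simp_all add: antisym_unit_def isym_unit_def idiag_unit_def)

lemma isym_unit_commute: "isym_unit n a b = isym_unit n b a"
  by (rule eq_matI) auto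

lemma sym_i_mat_eq_isym_unit: "j \<noteq> m \<Longrightarrow> sym_i_mat n j m = isym_unit n j m"
  by (rule eq_matI) (auto simp: sym_i_mat_def)

text \<open>Distributivity with dimension equations instead of carrier premises, so that the simplifier
  can discharge the side conditions.\<close>

lemma mat_ring_simps_dim:
  fixes A B C :: "'a::comm_ring mat"
  shows "dim_row A = dim_row B \<Longrightarrow> dim_col A = dim_col B \<Longrightarrow> dim_col A = dim_row C \<Longrightarrow>
      (A + B) * C = A * C + B * C"
    and "dim_row A = dim_row B \<Longrightarrow> dim_col A = dim_col B \<Longrightarrow> dim_col A = dim_row C \<Longrightarrow>
      (A - B) * C = A * C - B * C"
    and "dim_row B = dim_row C \<Longrightarrow> dim_col B = dim_col C \<Longrightarrow> dim_col A = dim_row B \<Longrightarrow>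
      A * (B + C) = A * B + A * C"
    and "dim_row B = dim_row C \<Longrightarrow> dim_col B = dim_col C \<Longrightarrow> dim_col A = dim_row B \<Longrightarrow>
      A * (B - C) = A * B - A * C"
    and "dim_col A = dim_row B \<Longrightarrow> A * (k \<cdot>\<^sub>m B) = k \<cdot>\<^sub>m (A * B)"
    and "dim_col A = dim_row B \<Longrightarrow> (k \<cdot>\<^sub>m A) * B = k \<cdot>\<^sub>m (A * B)"
  by (metis add_mult_distrib_mat carrier_matI, metis minus_mult_distrib_mat carrier_matI,
      metis mult_add_distrib_mat carrier_matI, metis mult_minus_distrib_mat carrier_matI,
      metis mult_smult_distrib carrier_matI, metis mult_smult_assoc_mat carrier_matI)

lemma lie_bracket_antisym_isym_unit:
  assumes "a < n" "b < n" "c < n" "a \<noteq> b" "b \<noteq> c" "a \<noteq> c"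
  shows "lie_bracket (antisym_unit n a b) (isym_unit n b c) = isym_unit n a c"
  unfolding lie_bracket_def antisym_unit_def isym_unit_def
  using assms by (simp add: mat_ring_simps_dim mat_unit_mult) (rule eq_matI; auto)

lemma lie_bracket_isym_isym_unit:
  assumes "a < n" "b < n" "c < n" "a \<noteq> b" "b \<noteq> c" "a \<noteq> c"
  shows "lie_bracket (isym_unit n a b) (isym_unit n b c) = complex_of_real (-1) \<cdot>\<^sub>m antisym_unit n a c"
  unfolding lie_bracket_def antisym_unit_def isym_unit_def
  using assms by (simp add: mat_ring_simps_dim mat_unit_mult) (rule eq_matI; auto)

lemma lie_bracket_antisym_isym_unit_same:
  assumes "a < n" "b < n" "a \<noteq> b"
  shows "lie_bracket (antisym_unit n a b) (isym_unit n a b) = complex_of_real 2 \<cdot>\<^sub>m idiag_unit n a b"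
  unfolding lie_bracket_def antisym_unit_def isym_unit_def idiag_unit_def
  using assms by (simp add: mat_ring_simps_dim mat_unit_mult) (rule eq_matI; auto)

section \<open>The real Lie algebra su(n)\<close>

lemma index_mult_mat_sum:
  "A \<in> carrier_mat n k \<Longrightarrow> B \<in> carrier_mat k n' \<Longrightarrow> i < n \<Longrightarrow> i' < n' \<Longrightarrow>
    (A * B) $$ (i, i') = (\<Sum>l<k. A $$ (i, l) * B $$ (l, i'))"
  by (simp add: scalar_prod_def lessThan_atLeast0)

lemma mtrace_mult_commute:
  fixes A B :: "'a::comm_ring_1 mat"
  assumes "A \<in> carrier_mat n k" "B \<in> carrier_mat k n"
  shows "mtrace (A * B) = mtrace (B * A)"
proof -
  have "mtrace (A * B) = (\<Sum>i<n. \<Sum>l<k. A $$ (i, l) * B $$ (l, i))"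
    using assms by (simp add: mtrace_def index_mult_mat_sum del: index_mult_mat(1))
  also have "\<dots> = (\<Sum>l<k. \<Sum>i<n. B $$ (l, i) * A $$ (i, l))"
    by (subst sum.swap) (simp add: mult.commute)
  also have "\<dots> = mtrace (B * A)"
    using assms by (simp add: mtrace_def index_mult_mat_sum del: index_mult_mat(1))
  finally show ?thesis .
qed

lemma suI:
  "A \<in> carrier_mat n n \<Longrightarrow> (\<And>i k. i < n \<Longrightarrow> k < n \<Longrightarrow> A $$ (k, i) = - cnj (A $$ (i, k))) \<Longrightarrow>
    mtrace A = 0 \<Longrightarrow> A \<in> su n"
  unfolding su_def by blast

lemma suD:
  assumes "A \<in> su n"
  shows "A \<in> carrier_mat n n" "\<And>i k. i < n \<Longrightarrow> k < n \<Longrightarrow> A $$ (k, i) = - cnj (A $$ (i, k))"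
    "mtrace A = 0"
  using assms unfolding su_def by blast+

lemma zero_su: "0\<^sub>m n n \<in> su n"
  by (simp add: su_def mtrace_def)

lemma add_su:
  assumes "A \<in> su n" "B \<in> su n"
  shows "A + B \<in> su n"
proof (rule suI)
  have "mtrace (A + B) = mtrace A + mtrace B"
    using suD(1)[OF assms(1)] suD(1)[OF assms(2)] by (simp add: mtrace_def sum.distrib)
  then show "mtrace (A + B) = 0"
    using suD(3)[OF assms(1)] suD(3)[OF assms(2)] by simp
next
  show "A + B \<in> carrier_mat n n"
    using suD(1)[OF assms(1)] suD(1)[OF assms(2)] by simp
  show "(A + B) $$ (k, i) = - cnj ((A + B) $$ (i, k))" if "i < n" "k < n" for i k
    using suD(1)[OF assms(1)] suD(1)[OF assms(2)] that suD(2)[OF assms(1) that] suD(2)[OF assms(2) that]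
    by simp
qed

lemma smult_real_su:
  assumes "A \<in> su n"
  shows "complex_of_real r \<cdot>\<^sub>m A \<in> su n"
proof (rule suI)
  have "mtrace (complex_of_real r \<cdot>\<^sub>m A) = complex_of_real r * mtrace A"
    using suD(1)[OF assms] by (simp add: mtrace_def sum_distrib_left)
  then show "mtrace (complex_of_real r \<cdot>\<^sub>m A) = 0"
    using suD(3)[OF assms] by simp
next
  show "complex_of_real r \<cdot>\<^sub>m A \<in> carrier_mat n n"
    using suD(1)[OF assms] by simp
  show "(complex_of_real r \<cdot>\<^sub>m A) $$ (k, i) = - cnj ((complex_of_real r \<cdot>\<^sub>m A) $$ (i, k))"
    if "i < n" "k < n" for i k
    using suD(1)[OF assms] that suD(2)[OF assms that] by simp
qed

lemma lie_bracket_su: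
  assumes A: "A \<in> su n" and B: "B \<in> su n"
  shows "lie_bracket A B \<in> su n"
proof (rule suI)
  note carrier = suD(1)[OF A] suD(1)[OF B]
  show "lie_bracket A B \<in> carrier_mat n n"
    using carrier by (simp add: lie_bracket_def minus_carrier_mat)
  have "mtrace (lie_bracket A B) = mtrace (A * B) - mtrace (B * A)"
    using carrier by (simp add: mtrace_def lie_bracket_def sum_subtractf)
  then show "mtrace (lie_bracket A B) = 0"
    using mtrace_mult_commute[OF carrier] by simp
  fix i k assume ik: "i < n" "k < n"
  have "lie_bracket A B $$ (k, i) = (\<Sum>l<n. A $$ (k, l) * B $$ (l, i)) - (\<Sum>l<n. B $$ (k, l) * A $$ (l, i))"
    using carrier ik by (simp add: lie_bracket_def index_mult_mat_sum del: index_mult_mat(1))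
  also have "\<dots> = (\<Sum>l<n. cnj (B $$ (i, l) * A $$ (l, k))) - (\<Sum>l<n. cnj (A $$ (i, l) * B $$ (l, k)))"
    using ik by (intro arg_cong2[where f = "(-)"] sum.cong refl)
      (simp_all add: suD(2)[OF A, of _ k] suD(2)[OF B, of i] suD(2)[OF A, of i] suD(2)[OF B, of _ k]
        mult.commute)
  also have "\<dots> = - cnj (lie_bracket A B $$ (i, k))"
    using carrier ik by (simp add: lie_bracket_def index_mult_mat_sum sum_subtractf del: index_mult_mat(1))
  finally show "lie_bracket A B $$ (k, i) = - cnj (lie_bracket A B $$ (i, k))" .
qed

lemma real_lie_gen_subset_su: "S \<subseteq> su n \<Longrightarrow> real_lie_gen n S \<subseteq> su n"
proof
  fix X assume "X \<in> real_lie_gen n S" "S \<subseteq> su n"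
  then show "X \<in> su n"
    by (induction rule: real_lie_gen.induct) (auto intro: zero_su add_su smult_real_su lie_bracket_su)
qed

lemma antisym_unit_su: "p < n \<Longrightarrow> q < n \<Longrightarrow> p \<noteq> q \<Longrightarrow> antisym_unit n p q \<in> su n"
  by (rule suI) (auto simp: mtrace_def intro!: sum.neutral)

lemma isym_unit_su: "p < n \<Longrightarrow> q < n \<Longrightarrow> p \<noteq> q \<Longrightarrow> isym_unit n p q \<in> su n"
  by (rule suI) (auto simp: mtrace_def intro!: sum.neutral)

section \<open>Block diagonal matrices\<close>

lemma sum_lessThan_add: "(\<Sum>k < a + (b::nat). f k) = (\<Sum>k < a. f k) + (\<Sum>k < b. f (a + k))"
  by (induction b) (simp_all add: ac_simps)

lemma index_block_diag:
  assumes "A \<in> carrier_mat n1 n1" "B \<in> carrier_mat n2 n2" "i < n1 + n2" "k < n1 + n2"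
  shows "block_diag A B $$ (i, k) =
    (if i < n1 \<and> k < n1 then A $$ (i, k) else if n1 \<le> i \<and> n1 \<le> k then B $$ (i - n1, k - n1) else 0)"
  using assms by (auto simp: block_diag_def)

lemma block_diag_su:
  assumes A: "A \<in> su n1" and B: "B \<in> su n2"
  shows "block_diag A B \<in> su (n1 + n2)"
proof (rule suI)
  note carrier = suD(1)[OF A] suD(1)[OF B]
  show "block_diag A B \<in> carrier_mat (n1 + n2) (n1 + n2)"
    unfolding block_diag_def using carrier by (rule four_block_carrier_mat)
  show "block_diag A B $$ (k, i) = - cnj (block_diag A B $$ (i, k))" if "i < n1 + n2" "k < n1 + n2" for i k
    using that suD(2)[OF A, of i k] suD(2)[OF B, of "i - n1" "k - n1"]
    by (auto simp: index_block_diag[OF carrier])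
  have "mtrace (block_diag A B) = (\<Sum>i < n1 + n2. block_diag A B $$ (i, i))"
    using carrier by (simp add: mtrace_def block_diag_def)
  also have "\<dots> = mtrace A + mtrace B"
    using carrier by (simp add: sum_lessThan_add index_block_diag mtrace_def)
  finally show "mtrace (block_diag A B) = 0"
    using suD(3)[OF A] suD(3)[OF B] by simp
qed

lemma eq_block_diagI:
  assumes "M \<in> carrier_mat (n1 + n2) (n1 + n2)" "A \<in> carrier_mat n1 n1" "B \<in> carrier_mat n2 n2"
    and "\<And>i k. i < n1 + n2 \<Longrightarrow> k < n1 + n2 \<Longrightarrow> M $$ (i, k) =
      (if i < n1 \<and> k < n1 then A $$ (i, k) else if n1 \<le> i \<and> n1 \<le> k then B $$ (i - n1, k - n1) else 0)"
  shows "M = block_diag A B"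
proof (rule eq_matI)
  show "M $$ (i, k) = block_diag A B $$ (i, k)"
    if "i < dim_row (block_diag A B)" "k < dim_col (block_diag A B)" for i k
    using that assms by (simp add: index_block_diag[OF assms(2,3)] block_diag_def)
qed (use assms in \<open>simp_all add: block_diag_def\<close>)

lemma antisym_unit_block_diag_upper:
  "p < n1 \<Longrightarrow> q < n1 \<Longrightarrow> antisym_unit (n1 + n2) p q = block_diag (antisym_unit n1 p q) (0\<^sub>m n2 n2)"
  by (rule eq_block_diagI) auto

lemma isym_unit_block_diag_upper:
  "p < n1 \<Longrightarrow> q < n1 \<Longrightarrow> isym_unit (n1 + n2) p q = block_diag (isym_unit n1 p q) (0\<^sub>m n2 n2)"
  by (rule eq_block_diagI) auto

lemma antisym_unit_block_diag_lower:
  "n1 \<le> p \<Longrightarrow> n1 \<le> q \<Longrightarrow>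
    antisym_unit (n1 + n2) p q = block_diag (0\<^sub>m n1 n1) (antisym_unit n2 (p - n1) (q - n1))"
  by (rule eq_block_diagI) (auto simp: eq_diff_iff)

lemma isym_unit_block_diag_lower:
  "n1 \<le> p \<Longrightarrow> n1 \<le> q \<Longrightarrow>
    isym_unit (n1 + n2) p q = block_diag (0\<^sub>m n1 n1) (isym_unit n2 (p - n1) (q - n1))"
  by (rule eq_block_diagI) (auto simp: eq_diff_iff)

section \<open>A real spanning set of su(n)\<close>

text \<open>Matrices of varying dimension do not form a monoid, so finite sums are taken entrywise.\<close>

definition mat_sum :: "nat \<Rightarrow> ('i \<Rightarrow> 'a::comm_monoid_add mat) \<Rightarrow> 'i set \<Rightarrow> 'a mat" where
  "mat_sum n M T = mat n n (\<lambda>rs. \<Sum>t\<in>T. M t $$ rs)"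

lemma mat_sum_carrier [simp]: "mat_sum n M T \<in> carrier_mat n n"
  and dim_mat_sum [simp]: "dim_row (mat_sum n M T) = n" "dim_col (mat_sum n M T) = n"
  and index_mat_sum [simp]: "r < n \<Longrightarrow> s < n \<Longrightarrow> mat_sum n M T $$ (r, s) = (\<Sum>t\<in>T. M t $$ (r, s))"
  by (simp_all add: mat_sum_def)

lemma real_lie_gen_mat_sum:
  assumes "finite T" "\<And>t. t \<in> T \<Longrightarrow> M t \<in> real_lie_gen n S" "\<And>t. t \<in> T \<Longrightarrow> M t \<in> carrier_mat n n"
  shows "mat_sum n M T \<in> real_lie_gen n S"
  using assms
proof (induction T rule: finite_induct)
  case empty
  have "mat_sum n M {} = 0\<^sub>m n n" by (auto intro!: eq_matI)
  then show ?case by (simp add: real_lie_gen.zero)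
next
  case (insert t T)
  have "mat_sum n M (insert t T) = M t + mat_sum n M T"
    using insert.hyps insert.prems(2) by (auto intro!: eq_matI)
  then show ?case
    using insert by (simp add: real_lie_gen.add)
qed

definition skew_pair_unit :: "nat \<Rightarrow> nat \<Rightarrow> nat \<Rightarrow> complex \<Rightarrow> complex mat" where
  "skew_pair_unit n a b z =
    complex_of_real (Re z) \<cdot>\<^sub>m antisym_unit n a b + complex_of_real (Im z) \<cdot>\<^sub>m isym_unit n a b"

lemma skew_pair_unit_carrier [simp]: "skew_pair_unit n a b z \<in> carrier_mat n n"
  by (simp add: skew_pair_unit_def)

lemma index_skew_pair_unit:
  assumes "a \<noteq> b" "r < n" "s < n"
  shows "skew_pair_unit n a b z $$ (r, s) =
    (if r = a \<and> s = b then z else if r = b \<and> s = a then - cnj z else 0)"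
  using assms by (auto simp: skew_pair_unit_def complex_eq_iff)

lemma finite_less_pairs: "finite {(a, b). a < b \<and> b < (n::nat)}"
  by (rule finite_subset[of _ "{..<n} \<times> {..<n}"]) auto

definition offdiag_part :: "nat \<Rightarrow> complex mat \<Rightarrow> complex mat" where
  "offdiag_part n A = mat_sum n (\<lambda>(a, b). skew_pair_unit n a b (A $$ (a, b))) {(a, b). a < b \<and> b < n}"

definition diag_part :: "nat \<Rightarrow> complex mat \<Rightarrow> complex mat" where
  "diag_part n A = mat_sum n (\<lambda>a. complex_of_real (Im (A $$ (a, a))) \<cdot>\<^sub>m idiag_unit n a (n - 1)) {..<n - 1}"

lemma index_offdiag_part:
  assumes "r < n" "s < n"
  shows "offdiag_part n A $$ (r, s) = (if r < s then A $$ (r, s) else if s < r then - cnj (A $$ (s, r)) else 0)"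
proof -
  let ?P = "{(a, b). a < b \<and> b < n}"
  have "offdiag_part n A $$ (r, s) =
      (\<Sum>t\<in>?P. (if t = (r, s) then A $$ (r, s) else 0) + (if t = (s, r) then - cnj (A $$ (s, r)) else 0))"
    unfolding offdiag_part_def index_mat_sum[OF assms]
  proof (rule sum.cong)
    fix t assume "t \<in> ?P"
    then obtain a b where "t = (a, b)" "a < b" by blast
    then show "(case t of (a, b) \<Rightarrow> skew_pair_unit n a b (A $$ (a, b))) $$ (r, s) =
        (if t = (r, s) then A $$ (r, s) else 0) + (if t = (s, r) then - cnj (A $$ (s, r)) else 0)"
      using assms by (auto simp: index_skew_pair_unit)
  qed simp
  also have "\<dots> = (if r < s then A $$ (r, s) else if s < r then - cnj (A $$ (s, r)) else 0)"
    using finite_less_pairs assms by (simp add: sum.distrib sum.delta')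
  finally show ?thesis .
qed

lemma index_diag_part:
  assumes "r < n" "s < n"
  shows "diag_part n A $$ (r, s) = (if r \<noteq> s then 0 else if r < n - 1 then \<i> * Im (A $$ (r, r))
      else - (\<i> * (\<Sum>a<n - 1. Im (A $$ (a, a)))))"
proof -
  have entry: "diag_part n A $$ (r, s) =
      (\<Sum>a<n - 1. (complex_of_real (Im (A $$ (a, a))) \<cdot>\<^sub>m idiag_unit n a (n - 1)) $$ (r, s))"
    using assms by (simp add: diag_part_def)
  consider "r \<noteq> s" | "r = s" "r < n - 1" | "r = s" "r = n - 1"
    using assms by linarith
  then show ?thesis
  proof cases
    case 1
    then show ?thesis using assms by (simp add: entry sum.neutral)
  next
    case 2
    have "diag_part n A $$ (r, s) = (\<Sum>a<n - 1. if a = r then \<i> * Im (A $$ (r, r)) else 0)"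
      unfolding entry using 2 assms by (intro sum.cong) auto
    then show ?thesis using 2 by simp
  next
    case 3
    have "diag_part n A $$ (r, s) = (\<Sum>a<n - 1. - (\<i> * Im (A $$ (a, a))))"
      unfolding entry using 3 assms by (intro sum.cong) auto
    then show ?thesis using 3 by (simp add: sum_negf sum_distrib_left)
  qed
qed

lemma su_diag_eq:
  assumes "A \<in> su n" "a < n"
  shows "A $$ (a, a) = \<i> * Im (A $$ (a, a))"
  using suD(2)[OF assms(1) assms(2) assms(2)] by (simp add: complex_eq_iff)

lemma su_last_diag_eq:
  assumes "A \<in> su n" "0 < n"
  shows "A $$ (n - 1, n - 1) = - (\<i> * (\<Sum>a<n - 1. Im (A $$ (a, a))))"
proof -
  have "{..<n} = insert (n - 1) {..<n - 1}"
    using assms(2) by auto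
  then have "0 = A $$ (n - 1, n - 1) + (\<Sum>a<n - 1. A $$ (a, a))"
    using suD(1,3)[OF assms(1)] by (simp add: mtrace_def)
  also have "(\<Sum>a<n - 1. A $$ (a, a)) = \<i> * (\<Sum>a<n - 1. Im (A $$ (a, a)))"
    using su_diag_eq[OF assms(1)] by (simp add: sum_distrib_left)
  finally show ?thesis
    by (simp add: eq_neg_iff_add_eq_0)
qed

lemma su_eq_offdiag_part_plus_diag_part:
  assumes "A \<in> su n" "0 < n"
  shows "A = offdiag_part n A + diag_part n A"
proof (rule eq_matI)
  fix r s
  assume "r < dim_row (offdiag_part n A + diag_part n A)" "s < dim_col (offdiag_part n A + diag_part n A)"
  then have rs: "r < n" "s < n"
    by (simp_all add: offdiag_part_def diag_part_def)
  consider "r < s" | "s < r" | "r = s" "r < n - 1" | "r = s" "r = n - 1"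
    using rs by linarith
  then show "A $$ (r, s) = (offdiag_part n A + diag_part n A) $$ (r, s)"
    using rs suD(2)[OF assms(1) rs(2) rs(1)] su_diag_eq[OF assms(1) rs(1)] su_last_diag_eq[OF assms]
      index_offdiag_part[OF rs, of A] index_diag_part[OF rs, of A]
    by cases (simp_all add: diag_part_def offdiag_part_def del: index_mat_sum)
qed (use suD(1)[OF assms(1)] in \<open>simp_all add: offdiag_part_def diag_part_def\<close>)

lemma su_subset_real_lie_gen:
  assumes "0 < n"
    and antisym: "\<And>a b. a < n \<Longrightarrow> b < n \<Longrightarrow> a \<noteq> b \<Longrightarrow> antisym_unit n a b \<in> real_lie_gen n S"
    and isym: "\<And>a b. a < n \<Longrightarrow> b < n \<Longrightarrow> a \<noteq> b \<Longrightarrow> isym_unit n a b \<in> real_lie_gen n S"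
    and idiag: "\<And>a b. a < n \<Longrightarrow> b < n \<Longrightarrow> a \<noteq> b \<Longrightarrow> idiag_unit n a b \<in> real_lie_gen n S"
  shows "su n \<subseteq> real_lie_gen n S"
proof
  fix A assume A: "A \<in> su n"
  have "offdiag_part n A \<in> real_lie_gen n S"
    unfolding offdiag_part_def using finite_less_pairs
  proof (rule real_lie_gen_mat_sum)
    fix t assume "t \<in> {(a, b). a < b \<and> b < n}"
    then obtain a b where "t = (a, b)" "a < b" "b < n" by blast
    then show "(case t of (a, b) \<Rightarrow> skew_pair_unit n a b (A $$ (a, b))) \<in> real_lie_gen n S"
      unfolding skew_pair_unit_def by (simp add: real_lie_gen.add real_lie_gen.smult antisym isym)
  qed (simp split: prod.split)
  moreover have "diag_part n A \<in> real_lie_gen n S"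
    unfolding diag_part_def using assms(1)
    by (intro real_lie_gen_mat_sum) (simp_all add: real_lie_gen.smult idiag)
  ultimately show "A \<in> real_lie_gen n S"
    by (subst su_eq_offdiag_part_plus_diag_part[OF A assms(1)]) (rule real_lie_gen.add)
qed

section \<open>The algebra generated by su(n1) + su(n2) and one cross element\<close>

lemma real_lie_gen_smult_cancel:
  assumes "complex_of_real c \<cdot>\<^sub>m Z \<in> real_lie_gen n S" "c \<noteq> 0" "Z \<in> carrier_mat n n"
  shows "Z \<in> real_lie_gen n S"
proof -
  have "Z = complex_of_real (1 / c) \<cdot>\<^sub>m (complex_of_real c \<cdot>\<^sub>m Z)"
    using assms(2,3) by (auto intro!: eq_matI simp flip: of_real_mult)
  then show ?thesis
    using real_lie_gen.smult[OF assms(1)] by metis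
qed

context
  fixes n1 n2 j m :: nat
  assumes j: "j < n1" and m: "n1 \<le> m" "m < n1 + n2"
begin

abbreviation cross_alg :: "complex mat set" where
  "cross_alg \<equiv> real_lie_gen (n1 + n2)
     ({block_diag A B | A B. A \<in> su n1 \<and> B \<in> su n2} \<union> {sym_i_mat (n1 + n2) j m})"

lemma block_units_in_cross_alg:
  assumes "p < n1 + n2" "q < n1 + n2" "p \<noteq> q" "p < n1 \<longleftrightarrow> q < n1"
  shows "antisym_unit (n1 + n2) p q \<in> cross_alg" "isym_unit (n1 + n2) p q \<in> cross_alg"
proof -
  have "antisym_unit (n1 + n2) p q \<in> {block_diag A B | A B. A \<in> su n1 \<and> B \<in> su n2} \<and>
      isym_unit (n1 + n2) p q \<in> {block_diag A B | A B. A \<in> su n1 \<and> B \<in> su n2}"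
  proof (cases "p < n1")
    case True
    then have "p < n1" "q < n1"
      using assms(4) by auto
    then show ?thesis
      using assms(3) zero_su[of n2] antisym_unit_su[of p n1 q] isym_unit_su[of p n1 q]
      by (simp add: antisym_unit_block_diag_upper isym_unit_block_diag_upper) blast
  next
    case False
    then have "n1 \<le> p" "n1 \<le> q" "p - n1 < n2" "q - n1 < n2" "p - n1 \<noteq> q - n1"
      using assms by auto
    then show ?thesis
      using zero_su[of n1] antisym_unit_su[of "p - n1" n2 "q - n1"] isym_unit_su[of "p - n1" n2 "q - n1"]
      by (simp add: antisym_unit_block_diag_lower isym_unit_block_diag_lower) blast
  qed
  then show "antisym_unit (n1 + n2) p q \<in> cross_alg" "isym_unit (n1 + n2) p q \<in> cross_alg"
    by (auto intro: real_lie_gen.gen)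
qed

lemma cross_isym_unit_in_cross_alg:
  assumes "p < n1" "n1 \<le> q" "q < n1 + n2"
  shows "isym_unit (n1 + n2) p q \<in> cross_alg"
proof -
  have "sym_i_mat (n1 + n2) j m \<in> cross_alg"
    by (rule real_lie_gen.gen) simp
  then have jm: "isym_unit (n1 + n2) j m \<in> cross_alg"
    using j m by (simp add: sym_i_mat_eq_isym_unit)
  have pm: "isym_unit (n1 + n2) p m \<in> cross_alg"
  proof (cases "p = j")
    case True
    then show ?thesis using jm by simp
  next
    case False
    have "antisym_unit (n1 + n2) p j \<in> cross_alg"
      using False assms j by (intro block_units_in_cross_alg) auto
    from real_lie_gen.bracket[OF this jm] show ?thesis
      using False assms j m by (simp add: lie_bracket_antisym_isym_unit)
  qed
  show ?thesis
  proof (cases "q = m")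
    case True
    then show ?thesis using pm by simp
  next
    case False
    have "antisym_unit (n1 + n2) q m \<in> cross_alg"
      using False assms m by (intro block_units_in_cross_alg) auto
    from real_lie_gen.bracket[OF this pm[unfolded isym_unit_commute[of _ p]]] show ?thesis
      using False assms m by (simp add: lie_bracket_antisym_isym_unit isym_unit_commute[of _ q])
  qed
qed

lemma isym_unit_in_cross_alg:
  assumes "a < n1 + n2" "b < n1 + n2" "a \<noteq> b"
  shows "isym_unit (n1 + n2) a b \<in> cross_alg"
proof -
  consider "a < n1 \<longleftrightarrow> b < n1" | "a < n1" "n1 \<le> b" | "b < n1" "n1 \<le> a"
    by linarith
  then show ?thesis
  proof cases
    case 1
    then show ?thesis using assms by (intro block_units_in_cross_alg)
  next
    case 2
    then show ?thesis using assms by (intro cross_isym_unit_in_cross_alg)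
  next
    case 3
    then show ?thesis using assms cross_isym_unit_in_cross_alg[of b a] by (simp add: isym_unit_commute)
  qed
qed

lemma antisym_unit_in_cross_alg:
  assumes "3 \<le> n1 + n2" "a < n1 + n2" "b < n1 + n2" "a \<noteq> b"
  shows "antisym_unit (n1 + n2) a b \<in> cross_alg"
proof -
  define c :: nat where "c = (if 0 \<notin> {a, b} then 0 else if 1 \<notin> {a, b} then 1 else 2)"
  have c: "c < n1 + n2" "c \<noteq> a" "c \<noteq> b"
    using assms by (auto simp: c_def)
  have "lie_bracket (isym_unit (n1 + n2) a c) (isym_unit (n1 + n2) c b) \<in> cross_alg"
    using assms(2,3) c by (intro real_lie_gen.bracket isym_unit_in_cross_alg) auto
  also have "lie_bracket (isym_unit (n1 + n2) a c) (isym_unit (n1 + n2) c b)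
      = complex_of_real (-1) \<cdot>\<^sub>m antisym_unit (n1 + n2) a b"
    using assms c by (intro lie_bracket_isym_isym_unit) auto
  finally have "complex_of_real (-1) \<cdot>\<^sub>m antisym_unit (n1 + n2) a b \<in> cross_alg" .
  then show ?thesis
    by (rule real_lie_gen_smult_cancel) simp_all
qed

lemma idiag_unit_in_cross_alg:
  assumes "3 \<le> n1 + n2" "a < n1 + n2" "b < n1 + n2" "a \<noteq> b"
  shows "idiag_unit (n1 + n2) a b \<in> cross_alg"
proof -
  have "lie_bracket (antisym_unit (n1 + n2) a b) (isym_unit (n1 + n2) a b) \<in> cross_alg"
    using antisym_unit_in_cross_alg[OF assms] isym_unit_in_cross_alg[OF assms(2-4)]
    by (rule real_lie_gen.bracket)
  also have "lie_bracket (antisym_unit (n1 + n2) a b) (isym_unit (n1 + n2) a b)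
      = complex_of_real 2 \<cdot>\<^sub>m idiag_unit (n1 + n2) a b"
    using assms by (intro lie_bracket_antisym_isym_unit_same)
  finally have "complex_of_real 2 \<cdot>\<^sub>m idiag_unit (n1 + n2) a b \<in> cross_alg" .
  then show ?thesis
    by (rule real_lie_gen_smult_cancel) simp_all
qed

end

theorem lemma6p1:
  fixes n1 n2 j m :: nat
  assumes "n1 \<ge> 1" and "n2 \<ge> 1" and "n1 + n2 \<ge> 3"
    and "j < n1" and "n1 \<le> m" and "m < n1 + n2"
  shows "real_lie_gen (n1 + n2)
           ({block_diag A B | A B. A \<in> su n1 \<and> B \<in> su n2} \<union> {sym_i_mat (n1 + n2) j m})
         = su (n1 + n2)"
proof
  have "sym_i_mat (n1 + n2) j m \<in> su (n1 + n2)"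
    using assms(4-6) sym_i_mat_eq_isym_unit[of j m] isym_unit_su[of j "n1 + n2" m] by simp
  moreover have "{block_diag A B | A B. A \<in> su n1 \<and> B \<in> su n2} \<subseteq> su (n1 + n2)"
    using block_diag_su by blast
  ultimately show "cross_alg n1 n2 j m \<subseteq> su (n1 + n2)"
    by (intro real_lie_gen_subset_su) simp
  show "su (n1 + n2) \<subseteq> cross_alg n1 n2 j m"
    using assms(1) antisym_unit_in_cross_alg[OF assms(4-6,3)] isym_unit_in_cross_alg[OF assms(4-6)]
      idiag_unit_in_cross_alg[OF assms(4-6,3)]
    by (intro su_subset_real_lie_gen) simp_all
qed

end
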